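(* For every integer $d\ge1$, $$\rho(0,d)=\frac{1}{d\,\varphi(d)},\qquad \rho(d,2d)=\begin{cases}\rho(0,2d)&\text{if $d$ is odd},\\ 3\rho(0,2d)&\text{if $d$ is even}.\end{cases}$$
   Context: $\varphi$ is Euler's totient. For integers $a$ and $d\ge1$, $\rho(a,d)=A\sum_{t\ge1,\ t\equiv a\pmod d}r(t)$, where $A=\prod_p\bigl(1-\frac{1}{p(p-1)}\bigr)$ (product over primes) and $r(t)=\frac{1}{t^2}\prod_{p\mid t}\frac{p^2-1}{p^2-p-1}$; equivalently $\rho(a,d)$ is the average over primes $p$ of the proportion of elements of $\mathbb F_p^*$ whose index $[\mathbb F_p^*:\langle x\rangle]$ is $\equiv a\pmod d$. *)

theory Defs
  imports "HOL-Analysis.Analysis" "HOL-Number_Theory.Number_Theory"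
begin

definition artinA :: real where
  "artinA = (\<Prod>n. if prime n then 1 - 1 / (real n * (real n - 1)) else 1)"

definition rfun :: "nat \<Rightarrow> real" where
  "rfun t = (1 / (real t)^2) *
     (\<Prod>p\<in>prime_factors t. ((real p)^2 - 1) / ((real p)^2 - real p - 1))"

definition rho :: "int \<Rightarrow> nat \<Rightarrow> real" where
  "rho a d = artinA * infsum rfun {t::nat. t \<ge> 1 \<and> [int t = a] (mod int d)}"

end

theory Submission
  imports Defs
begin

(* The integers t with t = 0 mod d, respectively t = d mod 2 d, are exactly the products d m with
   m ranging over all positive integers, respectively over the odd ones. Although r is not
   multiplicative, r (d m) = r d * r_d m for a multiplicative r_d that depends only on the primes
   dividing d, so each of the two sums is r d times an Euler product. Multiplied by A, the Euler
   factors at all primes not dividing 2 d cancel, and the finite product that remains is computed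
   directly: for the class of 0 it gives 1 / (d phi d), and restricting m to odd numbers only
   changes the factor at the prime 2. *)

section \<open>Euler products of nonnegative multiplicative functions\<close>

lemma has_sum_product_real:
  fixes g :: "'a \<Rightarrow> real" and h :: "'b \<Rightarrow> real"
  assumes g: "(g has_sum a) A" and h: "(h has_sum b) B"
  shows "((\<lambda>(x, y). g x * h y) has_sum a * b) (A \<times> B)"
proof (rule has_sum_SigmaI)
  show "((\<lambda>y. case (x, y) of (x, y) \<Rightarrow> g x * h y) has_sum g x * b) B" for x
    using has_sum_cmult_right[OF h] by simp
  show "((\<lambda>x. g x * b) has_sum a * b) A"
    using has_sum_cmult_left[OF g] .
  have g_abs: "(\<lambda>x. \<bar>g x\<bar>) summable_on A" and h_abs: "(\<lambda>y. \<bar>h y\<bar>) summable_on B"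
    using g h summable_on_iff_abs_summable_on_real by (auto simp: summable_on_def)
  have "(\<lambda>x. \<bar>g x\<bar> * (\<Sum>\<^sub>\<infinity>y\<in>B. \<bar>h y\<bar>)) summable_on A"
    using g_abs by (rule summable_on_cmult_left)
  moreover have "(\<Sum>\<^sub>\<infinity>y\<in>B. \<bar>h y\<bar>) \<ge> 0"
    by (rule infsum_nonneg) simp
  ultimately have "(\<lambda>z. norm (case z of (x, y) \<Rightarrow> g x * h y)) summable_on A \<times> B"
    using Infinite_Sum.abs_summable_on_Sigma_iff[where f = "\<lambda>(x, y). g x * h y" and B = "\<lambda>_. B"]
      h_abs by (auto simp: abs_mult infsum_cmult_right' intro: summable_on_cmult_right)
  then show "(\<lambda>(x, y). g x * h y) summable_on A \<times> B"
    using summable_on_iff_abs_summable_on_real by blast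
qed

definition smooth_numbers :: "nat \<Rightarrow> nat set" where
  "smooth_numbers N = {t. t > 0 \<and> (\<forall>p\<in>prime_factors t. p \<le> N)}"

lemma smooth_numbers_0: "smooth_numbers 0 = {1}"
proof -
  have "prime_factors t = {}" if "\<forall>p\<in>prime_factors t. p \<le> 0" for t :: nat
    using that by (metis all_not_in_conv in_prime_factors_imp_prime le_0_eq not_prime_0)
  then show ?thesis
    by (auto simp: smooth_numbers_def prime_factorization_empty_iff)
qed

lemma smooth_numbers_mono: "N \<le> M \<Longrightarrow> smooth_numbers N \<subseteq> smooth_numbers M"
  unfolding smooth_numbers_def by fastforce

lemma smooth_numbers_Suc_nonprime:
  "\<not> prime (Suc N) \<Longrightarrow> smooth_numbers (Suc N) = smooth_numbers N"
  unfolding smooth_numbers_def by (fastforce simp: le_Suc_eq)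

lemma finite_subset_smooth_numbers:
  assumes "finite F" "F \<subseteq> {0<..}"
  shows "F \<subseteq> smooth_numbers (Max (insert 0 F))"
  unfolding smooth_numbers_def
proof safe
  fix t p assume "t \<in> F" "p \<in> prime_factors t"
  then have "p \<le> t" "t \<le> Max (insert 0 F)"
    using assms by (auto intro: dvd_imp_le)
  then show "p \<le> Max (insert 0 F)" by simp
qed (use assms in auto)

lemma prime_not_dvd_smooth_numbers:
  assumes p: "prime p" and s: "s \<in> smooth_numbers (p - 1)"
  shows "\<not> p dvd s"
proof
  assume "p dvd s"
  then have "p \<le> p - 1" using p s by (auto simp: smooth_numbers_def prime_factors_dvd)
  then show False using prime_gt_0_nat[OF p] by simp
qed

lemma inj_on_prime_power_times_smooth_numbers:
  assumes p: "prime p"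
  shows "inj_on (\<lambda>(k, s). p ^ k * s) (UNIV \<times> smooth_numbers (p - 1))"
proof (rule inj_onI)
  fix x y :: "nat \<times> nat"
  assume "x \<in> UNIV \<times> smooth_numbers (p - 1)" "y \<in> UNIV \<times> smooth_numbers (p - 1)"
    and eq: "(case x of (k, s) \<Rightarrow> p ^ k * s) = (case y of (k, s) \<Rightarrow> p ^ k * s)"
  then obtain k s k' s' where xy: "x = (k, s)" "y = (k', s')" and "\<not> p dvd s" "\<not> p dvd s'"
    using prime_not_dvd_smooth_numbers[OF p] by auto
  moreover have eq': "p ^ k * s = p ^ k' * s'"
    using eq xy by simp
  ultimately have "multiplicity p (p ^ k * s) = k" "multiplicity p (p ^ k * s) = k'"
    using prime_gt_0_nat[OF p] by (auto intro!: multiplicity_decomposeI)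
  then show "x = y"
    using eq' prime_gt_0_nat[OF p] by (simp add: xy)
qed

lemma prime_power_times_smooth_numbers:
  assumes p: "prime p"
  shows "(\<lambda>(k, s). p ^ k * s) ` (UNIV \<times> smooth_numbers (p - 1)) = smooth_numbers p"
proof safe
  fix k s assume s: "s \<in> smooth_numbers (p - 1)"
  then have "s > 0" by (simp add: smooth_numbers_def)
  moreover have "prime_factors (p ^ k) \<subseteq> {p}"
    using p by (simp add: prime_factorization_prime_power)
  ultimately have "prime_factors (p ^ k * s) \<subseteq> insert p (prime_factors s)"
    using p by (auto simp: prime_factors_product)
  moreover have "q \<le> p" if "q \<in> prime_factors s" for q
    using s that by (auto simp: smooth_numbers_def)
  ultimately show "p ^ k * s \<in> smooth_numbers p"
    using \<open>s > 0\<close> prime_gt_0_nat[OF p] by (auto simp: smooth_numbers_def)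
next
  fix t assume t: "t \<in> smooth_numbers p"
  have "t \<noteq> 0" "\<not> is_unit p"
    using t p by (auto simp: smooth_numbers_def)
  then obtain s where "t = p ^ multiplicity p t * s" and "\<not> p dvd s"
    by (rule multiplicity_decompose')
  then obtain m where s: "t = p ^ m * s" "\<not> p dvd s" by blast
  have "q \<le> p - 1" if q: "q \<in> prime_factors s" for q
  proof -
    have "q \<in> prime_factors t"
      using q t s(1) by (auto simp: smooth_numbers_def prime_factors_dvd)
    then have "q \<le> p" using t by (simp add: smooth_numbers_def)
    moreover have "q \<noteq> p" using q s(2) by auto
    ultimately show ?thesis by simp
  qed
  moreover have "s > 0" using t s(1) by (auto simp: smooth_numbers_def intro: gr0I)
  ultimately have "s \<in> smooth_numbers (p - 1)"
    by (simp add: smooth_numbers_def)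
  then show "t \<in> (\<lambda>(k, s). p ^ k * s) ` (UNIV \<times> smooth_numbers (p - 1))"
    using s by auto
qed

lemma bij_betw_smooth_numbers_prime:
  assumes "prime p"
  shows "bij_betw (\<lambda>(k, s). p ^ k * s) (UNIV \<times> smooth_numbers (p - 1)) (smooth_numbers p)"
  unfolding bij_betw_def
  using inj_on_prime_power_times_smooth_numbers[OF assms] prime_power_times_smooth_numbers[OF assms]
  by blast

lemma has_sum_smooth_numbers:
  fixes f :: "nat \<Rightarrow> real"
  assumes mult: "\<And>a b. coprime a b \<Longrightarrow> f (a * b) = f a * f b" and "f 1 = 1"
    and local_sums: "\<And>p. prime p \<Longrightarrow> ((\<lambda>k. f (p ^ k)) has_sum L p) UNIV"
  shows "(f has_sum (\<Prod>p | prime p \<and> p \<le> N. L p)) (smooth_numbers N)"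
proof (induction N)
  case 0
  have no_primes: "{p :: nat. prime p \<and> p \<le> 0} = {}" by auto
  have "(f has_sum 1) {1}"
    using \<open>f 1 = 1\<close> has_sum_finite[of "{1}" f] by simp
  then show ?case
    by (simp only: smooth_numbers_0 no_primes prod.empty)
next
  case (Suc N)
  show ?case
  proof (cases "prime (Suc N)")
    case False
    then have "{p. prime p \<and> p \<le> Suc N} = {p. prime p \<and> p \<le> N}"
      using le_Suc_eq by auto
    then show ?thesis
      using Suc.IH False by (simp add: smooth_numbers_Suc_nonprime)
  next
    case True
    define p where "p = Suc N"
    have primes: "{p. prime p \<and> p \<le> Suc N} = insert p {p. prime p \<and> p \<le> N}"
      using True le_Suc_eq by (auto simp: p_def)
    have bij: "bij_betw (\<lambda>(k, s). p ^ k * s) (UNIV \<times> smooth_numbers N) (smooth_numbers p)"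
      using bij_betw_smooth_numbers_prime[OF True] by (simp add: p_def)
    have "((\<lambda>(k, s). f (p ^ k) * f s) has_sum L p * (\<Prod>q | prime q \<and> q \<le> N. L q))
            (UNIV \<times> smooth_numbers N)"
      using True Suc.IH by (intro has_sum_product_real local_sums) (simp_all add: p_def)
    moreover have "f (p ^ k * s) = f (p ^ k) * f s" if "s \<in> smooth_numbers N" for k s
    proof (rule mult)
      have "\<not> p dvd s"
        using prime_not_dvd_smooth_numbers[OF True] that by (simp add: p_def)
      then show "coprime (p ^ k) s"
        using True by (simp add: p_def prime_imp_coprime)
    qed
    ultimately have "(f has_sum L p * (\<Prod>q | prime q \<and> q \<le> N. L q)) (smooth_numbers p)"
      by (subst has_sum_reindex_bij_betw[OF bij, symmetric])
        (auto elim!: has_sum_cong[THEN iffD1, rotated])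
    then show ?thesis
      using primes by (simp add: p_def)
  qed
qed

lemma has_sum_exhaustion_nonneg:
  fixes f :: "'a \<Rightarrow> real"
  assumes nonneg: "\<And>x. x \<in> A \<Longrightarrow> f x \<ge> 0"
    and S_subset: "\<And>N. S N \<subseteq> A" and S_mono: "mono S"
    and S_cover: "\<And>F. finite F \<Longrightarrow> F \<subseteq> A \<Longrightarrow> \<exists>N. F \<subseteq> S N"
    and sums: "\<And>N. (f has_sum s N) (S N)" and lim: "s \<longlonglongrightarrow> l"
  shows "(f has_sum l) A"
proof -
  have finite_sum_le: "sum f F \<le> l" if F: "finite F" "F \<subseteq> A" for F
  proof -
    obtain N where "F \<subseteq> S N"
      using S_cover F by blast
    then have "sum f F \<le> s M" if "M \<ge> N" for M
      using monoD[OF S_mono that] S_subset nonneg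
      by (intro has_sum_mono'[OF has_sum_finite[OF F(1)] sums]) blast+
    then show ?thesis
      using lim by (intro LIMSEQ_le_const) auto
  qed
  have summable: "f summable_on A"
    using nonneg finite_sum_le by (intro nonneg_bdd_above_summable_on bdd_aboveI2) auto
  have "s N \<le> infsum f A" for N
    using S_subset nonneg by (intro has_sum_mono'[OF sums has_sum_infsum[OF summable]]) auto
  then have "l \<le> infsum f A"
    using lim by (intro LIMSEQ_le_const2) auto
  moreover have "infsum f A \<le> l"
    using summable finite_sum_le by (rule infsum_le_finite_sums)
  ultimately show ?thesis
    using has_sum_infsum[OF summable] by simp
qed

lemma has_sum_euler_product:
  fixes f :: "nat \<Rightarrow> real"
  assumes "\<And>a b. coprime a b \<Longrightarrow> f (a * b) = f a * f b" and "f 1 = 1"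
    and "\<And>p. prime p \<Longrightarrow> ((\<lambda>k. f (p ^ k)) has_sum L p) UNIV"
    and "\<And>n. n > 0 \<Longrightarrow> f n \<ge> 0"
    and "(\<lambda>N. \<Prod>p | prime p \<and> p \<le> N. L p) \<longlonglongrightarrow> l"
  shows "(f has_sum l) {0<..}"
proof (rule has_sum_exhaustion_nonneg)
  show "(f has_sum (\<Prod>p | prime p \<and> p \<le> N. L p)) (smooth_numbers N)" for N
    using assms(1-3) by (rule has_sum_smooth_numbers)
  show "\<exists>N. F \<subseteq> smooth_numbers N" if "finite F" "F \<subseteq> {0<..}" for F
    using finite_subset_smooth_numbers[OF that] by blast
qed (use assms smooth_numbers_mono in \<open>auto simp: mono_def smooth_numbers_def\<close>)

section \<open>The Artin constant\<close>

lemma prime_real_ge_2: "prime p \<Longrightarrow> real p \<ge> 2"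
  using prime_ge_2_nat by fastforce

definition artin_factor :: "nat \<Rightarrow> real" where
  "artin_factor p = (if prime p then 1 - 1 / (real p * (real p - 1)) else 1)"

lemma artinA_eq_prodinf: "artinA = prodinf artin_factor"
  unfolding artinA_def artin_factor_def ..

lemma artin_factor_pos: "artin_factor p > 0"
proof (cases "prime p")
  case True
  then have "real p * (real p - 1) \<ge> 2 * 1"
    using prime_real_ge_2 by (intro mult_mono) auto
  then show ?thesis
    using True by (simp add: artin_factor_def field_simps)
qed (simp add: artin_factor_def)

lemma convergent_prod_artin_factor: "convergent_prod artin_factor"
proof (intro abs_convergent_prod_imp_convergent_prod summable_imp_abs_convergent_prod)
  show "summable (\<lambda>p. norm (artin_factor p - 1))"
  proof (rule summable_comparison_test')
    show "summable (\<lambda>p. 2 * inverse (real p ^ 2))"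
      by (intro summable_mult inverse_power_summable) auto
    show "norm (norm (artin_factor p - 1)) \<le> 2 * inverse (real p ^ 2)" for p
    proof (cases "prime p")
      case True
      then have "2 * real p \<le> real p * real p"
        using prime_real_ge_2 by (intro mult_right_mono) auto
      then have "real p ^ 2 \<le> 2 * (real p * (real p - 1))"
        by (simp add: power2_eq_square algebra_simps)
      then show ?thesis
        using True prime_real_ge_2[OF True] by (simp add: artin_factor_def field_simps)
    qed (simp add: artin_factor_def)
  qed
qed

lemma artinA_pos: "artinA > 0"
  unfolding artinA_eq_prodinf
  using convergent_prod_artin_factor artin_factor_pos by (rule less_0_prodinf)

lemma tendsto_artin_partial_products:
  "(\<lambda>N. \<Prod>p | prime p \<and> p \<le> N. artin_factor p) \<longlonglongrightarrow> artinA"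
proof -
  have "(\<Prod>p | prime p \<and> p \<le> N. artin_factor p) = (\<Prod>p\<le>N. artin_factor p)" for N
    by (rule prod.mono_neutral_left) (auto simp: artin_factor_def)
  then show ?thesis
    using convergent_prod_LIMSEQ[OF convergent_prod_artin_factor]
    by (simp add: artinA_eq_prodinf)
qed

section \<open>Twisted densities\<close>

lemma square_bounds_of_ge_2:
  fixes x :: real
  assumes "x \<ge> 2"
  shows "x\<^sup>2 - 1 > 0" and "x\<^sup>2 - x - 1 > 0"
proof -
  have "2 * x \<le> x * x"
    using assms by (intro mult_right_mono) auto
  then show "x\<^sup>2 - 1 > 0" "x\<^sup>2 - x - 1 > 0"
    unfolding power2_eq_square using assms by linarith+
qed

definition local_weight :: "nat \<Rightarrow> nat \<Rightarrow> nat \<Rightarrow> real" where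
  "local_weight D E p =
     (if p dvd E then 0 else if p dvd D then 1 else (real p ^ 2 - 1) / (real p ^ 2 - real p - 1))"

(* r_twisted D E m = r (D m) / r D if m is coprime to E, and 0 otherwise. *)
definition r_twisted :: "nat \<Rightarrow> nat \<Rightarrow> nat \<Rightarrow> real" where
  "r_twisted D E m = (\<Prod>p\<in>prime_factors m. local_weight D E p) / real m ^ 2"

definition euler_factor :: "nat \<Rightarrow> nat \<Rightarrow> nat \<Rightarrow> real" where
  "euler_factor D E p = 1 + local_weight D E p / (real p ^ 2 - 1)"

(* Multiplied by A, the Euler factors of r_twisted D E at primes not dividing D E cancel;
   this finite product is what remains. *)
definition euler_correction :: "nat \<Rightarrow> nat \<Rightarrow> real" where
  "euler_correction D E = (\<Prod>p\<in>prime_factors (D * E). artin_factor p * euler_factor D E p)"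

lemma local_weight_nonneg: "prime p \<Longrightarrow> local_weight D E p \<ge> 0"
  using square_bounds_of_ge_2[OF prime_real_ge_2, of p] by (simp add: local_weight_def)

lemma r_twisted_nonneg: "r_twisted D E m \<ge> 0"
  unfolding r_twisted_def by (auto intro!: divide_nonneg_nonneg prod_nonneg local_weight_nonneg)

lemma r_twisted_0 [simp]: "r_twisted D E 0 = 0"
  by (simp add: r_twisted_def)

lemma r_twisted_1: "r_twisted D E 1 = 1"
  by (simp add: r_twisted_def)

lemma r_twisted_mult:
  assumes "coprime a b"
  shows "r_twisted D E (a * b) = r_twisted D E a * r_twisted D E b"
proof (cases "a = 0 \<or> b = 0")
  case True
  then consider "a = 0" "b = 1" | "a = 1" "b = 0"
    using assms by fastforce
  then show ?thesis
    by cases simp_all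
next
  case False
  then have "prime_factors (a * b) = prime_factors a \<union> prime_factors b"
    by (simp add: prime_factors_product)
  moreover have "prime_factors a \<inter> prime_factors b = {}"
    using assms by (auto simp: in_prime_factors_iff dest: coprime_common_divisor_nat)
  ultimately show ?thesis
    by (simp add: r_twisted_def prod.union_disjoint power_mult_distrib)
qed

lemma r_twisted_prime_power:
  assumes "prime p"
  shows "r_twisted D E (p ^ Suc k) = local_weight D E p * (1 / real p ^ 2) ^ Suc k"
proof -
  have "prime_factors (p ^ Suc k) = {p}"
    using assms by (simp add: prime_factors_power prime_prime_factors del: power_Suc)
  moreover have "real (p ^ Suc k) ^ 2 = (real p ^ 2) ^ Suc k"
    by (simp add: power2_eq_square power_mult_distrib)
  ultimately show ?thesis
    by (simp add: r_twisted_def power_one_over)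
qed

lemma has_sum_r_twisted_prime_powers:
  assumes p: "prime p"
  shows "((\<lambda>k. r_twisted D E (p ^ k)) has_sum euler_factor D E p) UNIV"
proof (rule sums_nonneg_imp_has_sum[OF _ r_twisted_nonneg])
  define P where "P = real p"
  define q where "q = 1 / P ^ 2"
  have P: "P \<ge> 2"
    using prime_real_ge_2[OF p] by (simp add: P_def)
  then have P2: "P ^ 2 > 1"
    using square_bounds_of_ge_2(1)[OF P] by simp
  then have q: "0 < q" "q < 1"
    using P by (simp_all add: q_def divide_less_eq)
  have "q * (1 / (1 - q)) = 1 / (P ^ 2 - 1)"
    using P P2 by (simp add: q_def field_simps)
  then have limit: "local_weight D E p * q * (1 / (1 - q)) = euler_factor D E p - 1"
    unfolding mult.assoc by (simp add: euler_factor_def P_def)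
  have "(\<lambda>k. r_twisted D E (p ^ Suc k)) = (\<lambda>k. local_weight D E p * q * q ^ k)"
    unfolding r_twisted_prime_power[OF p] by (simp add: q_def P_def)
  moreover have "(\<lambda>k. local_weight D E p * q * q ^ k) sums (local_weight D E p * q * (1 / (1 - q)))"
    using q by (intro sums_mult geometric_sums) simp
  ultimately have "(\<lambda>k. r_twisted D E (p ^ Suc k)) sums (euler_factor D E p - 1)"
    by (simp only: limit)
  then have "(\<lambda>k. r_twisted D E (p ^ k)) sums (euler_factor D E p - 1 + r_twisted D E (p ^ 0))"
    by (rule sums_Suc_iff[THEN iffD1])
  then show "(\<lambda>k. r_twisted D E (p ^ k)) sums euler_factor D E p"
    unfolding power_0 r_twisted_1 by simp
qed

lemma artin_factor_mult_euler_factor: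
  assumes "prime p" "\<not> p dvd D" "\<not> p dvd E"
  shows "artin_factor p * euler_factor D E p = 1"
proof -
  define P where "P = real p"
  have "P \<ge> 2"
    using prime_real_ge_2[OF assms(1)] by (simp add: P_def)
  then have v: "P\<^sup>2 - 1 > 0" and u: "P\<^sup>2 - P - 1 > 0"
    by (rule square_bounds_of_ge_2)+
  have identity: "(1 - 1 / (x + 1)) * (1 + y / x / y) = 1" if "x > 0" "y > 0" for x y :: real
  proof -
    have "1 - 1 / (x + 1) = x / (x + 1)" "1 + y / x / y = (x + 1) / x"
      using that by (simp_all add: field_simps)
    then show ?thesis
      using that by simp
  qed
  have "P * (P - 1) = (P\<^sup>2 - P - 1) + 1"
    by (simp add: power2_eq_square algebra_simps)
  then have "(1 - 1 / (P * (P - 1))) * (1 + (P\<^sup>2 - 1) / (P\<^sup>2 - P - 1) / (P\<^sup>2 - 1)) = 1"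
    using identity[OF u v] by simp
  then show ?thesis
    using assms by (simp add: artin_factor_def euler_factor_def local_weight_def P_def)
qed

lemma prod_artin_euler_factor_superset:
  assumes "finite S" "\<And>p. p \<in> S \<Longrightarrow> prime p" "prime_factors (D * E) \<subseteq> S" "D > 0" "E > 0"
  shows "(\<Prod>p\<in>S. artin_factor p * euler_factor D E p) = euler_correction D E"
  unfolding euler_correction_def
proof (rule prod.mono_neutral_right)
  show "\<forall>p\<in>S - prime_factors (D * E). artin_factor p * euler_factor D E p = 1"
    using assms by (auto intro!: artin_factor_mult_euler_factor simp: in_prime_factors_iff)
qed (use assms in auto)

lemma has_sum_r_twisted:
  assumes "D > 0" "E > 0"
  shows "(r_twisted D E has_sum euler_correction D E / artinA) {0<..}"
proof (rule has_sum_euler_product)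
  let ?A = "\<lambda>N. \<Prod>p | prime p \<and> p \<le> N. artin_factor p"
  show "(\<lambda>N. \<Prod>p | prime p \<and> p \<le> N. euler_factor D E p) \<longlonglongrightarrow> euler_correction D E / artinA"
  proof (rule Lim_transform_eventually)
    show "(\<lambda>N. euler_correction D E / ?A N) \<longlonglongrightarrow> euler_correction D E / artinA"
      using tendsto_artin_partial_products artinA_pos by (intro tendsto_divide tendsto_const) auto
    show "\<forall>\<^sub>F N in sequentially.
        euler_correction D E / ?A N = (\<Prod>p | prime p \<and> p \<le> N. euler_factor D E p)"
    proof (rule eventually_sequentiallyI)
      fix N assume N: "D * E \<le> N"
      have "p \<le> N" if "p \<in> prime_factors (D * E)" for p
        using that assms dvd_imp_le[of p "D * E"] N by auto
      then have "prime_factors (D * E) \<subseteq> {p. prime p \<and> p \<le> N}"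
        by auto
      then have "(\<Prod>p | prime p \<and> p \<le> N. artin_factor p * euler_factor D E p) = euler_correction D E"
        using assms by (intro prod_artin_euler_factor_superset) auto
      then have "?A N * (\<Prod>p | prime p \<and> p \<le> N. euler_factor D E p) = euler_correction D E"
        by (simp add: prod.distrib)
      moreover have "?A N \<noteq> 0"
        by (simp add: artin_factor_pos[THEN order_less_imp_not_eq2])
      ultimately show "euler_correction D E / ?A N = (\<Prod>p | prime p \<and> p \<le> N. euler_factor D E p)"
        by (metis nonzero_mult_div_cancel_left)
    qed
  qed
qed (use has_sum_r_twisted_prime_powers r_twisted_mult r_twisted_nonneg r_twisted_1 in auto)

lemma rfun_eq_r_twisted: "rfun = r_twisted 1 1"
proof
  fix t
  have "(\<Prod>p\<in>prime_factors t. local_weight 1 1 p) =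
      (\<Prod>p\<in>prime_factors t. (real p ^ 2 - 1) / (real p ^ 2 - real p - 1))"
    by (rule prod.cong) (auto simp: local_weight_def)
  then show "rfun t = r_twisted 1 1 t"
    by (simp add: rfun_def r_twisted_def)
qed

lemma rfun_mult:
  assumes "d > 0" "m > 0"
  shows "rfun (d * m) = rfun d * r_twisted d 1 m"
proof -
  have factors: "prime_factors (d * m) = prime_factors d \<union> (prime_factors m - prime_factors d)"
    using assms by (auto simp: prime_factors_product)
  have "(\<Prod>p\<in>prime_factors (d * m). local_weight 1 1 p) =
      (\<Prod>p\<in>prime_factors d. local_weight 1 1 p) *
      (\<Prod>p\<in>prime_factors m - prime_factors d. local_weight 1 1 p)"
    unfolding factors by (rule prod.union_disjoint) auto
  also have "(\<Prod>p\<in>prime_factors m - prime_factors d. local_weight 1 1 p) =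
      (\<Prod>p\<in>prime_factors m - prime_factors d. local_weight d 1 p)"
    using assms by (intro prod.cong) (auto simp: local_weight_def in_prime_factors_iff)
  also have "\<dots> = (\<Prod>p\<in>prime_factors m. local_weight d 1 p)"
    using assms by (intro prod.mono_neutral_left) (auto simp: local_weight_def in_prime_factors_iff)
  finally show ?thesis
    by (simp add: rfun_eq_r_twisted r_twisted_def power_mult_distrib)
qed

lemma r_twisted_eq_if_coprime: "r_twisted D E m = (if coprime m E then r_twisted D 1 m else 0)"
proof (cases "coprime m E")
  case True
  have "local_weight D E p = local_weight D 1 p" if p: "p \<in> prime_factors m" for p
  proof -
    have "prime p" "p dvd m"
      using p by auto
    then have "\<not> p dvd E" "\<not> p dvd 1"
      using True coprime_common_divisor not_prime_unit by blast+
    then show ?thesis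
      by (simp add: local_weight_def)
  qed
  with True show ?thesis
    by (simp add: r_twisted_def cong: prod.cong)
next
  case False
  then obtain c where "c dvd m" "c dvd E" "c \<noteq> 1"
    by (auto elim: not_coprimeE)
  then obtain p where p: "prime p" "p dvd m" "p dvd E"
    using prime_factor_nat[of c] by (blast intro: dvd_trans)
  show ?thesis
  proof (cases "m = 0")
    case False
    with p have "p \<in> prime_factors m" "local_weight D E p = 0"
      by (simp_all add: in_prime_factors_iff local_weight_def)
    then have "(\<Prod>q\<in>prime_factors m. local_weight D E q) = 0"
      by (intro prod_zero) auto
    with \<open>\<not> coprime m E\<close> show ?thesis
      by (simp add: r_twisted_def)
  qed simp
qed

section \<open>Evaluation of the densities\<close>

lemma infsum_rfun_multiples:
  assumes "d > 0" "E > 0"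
  shows "infsum rfun ((*) d ` {m. m > 0 \<and> coprime m E}) = rfun d * euler_correction d E / artinA"
proof -
  have "inj_on ((*) d) {m. m > 0 \<and> coprime m E}"
    using assms by (auto intro: inj_onI)
  then have "infsum rfun ((*) d ` {m. m > 0 \<and> coprime m E}) =
      infsum (\<lambda>m. rfun (d * m)) {m. m > 0 \<and> coprime m E}"
    by (simp add: infsum_reindex o_def)
  also have "\<dots> = infsum (\<lambda>m. rfun d * r_twisted d E m) {0<..}"
    using assms by (intro infsum_cong_neutral) (auto simp: rfun_mult r_twisted_eq_if_coprime[of d E])
  also have "\<dots> = rfun d * (euler_correction d E / artinA)"
    using has_sum_r_twisted[OF assms] by (simp add: infsum_cmult_right' infsumI)
  finally show ?thesis
    by simp
qed

lemma rho_0_eq_euler_correction: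
  assumes "d > 0"
  shows "rho 0 d = rfun d * euler_correction d 1"
proof -
  have "{t. t \<ge> 1 \<and> [int t = 0] (mod int d)} = (*) d ` {m. m > 0 \<and> coprime m 1}"
    using assms by (auto simp: cong_0_iff)
  then show ?thesis
    using infsum_rfun_multiples[of d 1] assms artinA_pos by (simp add: rho_def)
qed

lemma cong_d_mod_2d_iff:
  fixes d t :: nat
  assumes "d > 0"
  shows "[int t = int d] (mod int (2 * d)) \<longleftrightarrow> (\<exists>m. t = d * m \<and> odd m)"
proof -
  have "[int t = int d] (mod int (2 * d)) \<longleftrightarrow> t mod (d * 2) = d"
    unfolding cong_int_iff using assms by (simp add: cong_def mult.commute)
  also have "\<dots> \<longleftrightarrow> t mod d = 0 \<and> odd (t div d)"
    unfolding mod_mult2_eq using mod_less_divisor[OF assms, of t]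
    by (cases "t div d mod 2 = 0") (auto simp: odd_iff_mod_2_eq_one)
  also have "\<dots> \<longleftrightarrow> (\<exists>m. t = d * m \<and> odd m)"
    using assms by auto
  finally show ?thesis .
qed

lemma rho_d_2d_eq_euler_correction:
  assumes "d > 0"
  shows "rho (int d) (2 * d) = rfun d * euler_correction d 2"
proof -
  have "{t. t \<ge> 1 \<and> [int t = int d] (mod int (2 * d))} = (*) d ` {m. m > 0 \<and> coprime m 2}"
    unfolding cong_d_mod_2d_iff[OF assms] using assms by (auto intro: odd_pos)
  then show ?thesis
    using infsum_rfun_multiples[of d 2] assms artinA_pos by (simp add: rho_def)
qed

lemma local_factor_at_prime_divisor:
  assumes "prime p" "p dvd d"
  shows "local_weight 1 1 p * (artin_factor p * euler_factor d 1 p) = 1 / (1 - 1 / real p)"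
proof -
  define P where "P = real p"
  have P: "P \<ge> 2"
    using prime_real_ge_2[OF assms(1)] by (simp add: P_def)
  then have "P\<^sup>2 - 1 > 0" "P\<^sup>2 - P - 1 > 0"
    by (rule square_bounds_of_ge_2)+
  then have nonzero: "P\<^sup>2 - 1 \<noteq> 0" "P\<^sup>2 - P - 1 \<noteq> 0" "P * (P - 1) \<noteq> 0"
    using P by (linarith, linarith, simp)
  have cancel: "u / v * (v / w * (z / u)) = z / w" if "u \<noteq> 0" "v \<noteq> 0" "w \<noteq> 0"
    for u v w z :: real
    using that by (simp add: field_simps)
  have artin: "1 - 1 / (P * (P - 1)) = (P\<^sup>2 - P - 1) / (P * (P - 1))"
    using nonzero(3) by (simp add: power2_eq_square field_simps)
  have euler: "1 + 1 / (P\<^sup>2 - 1) = P\<^sup>2 / (P\<^sup>2 - 1)"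
    using nonzero(1) by (simp add: field_simps)
  have "(P\<^sup>2 - 1) / (P\<^sup>2 - P - 1) * ((1 - 1 / (P * (P - 1))) * (1 + 1 / (P\<^sup>2 - 1)))
      = P\<^sup>2 / (P * (P - 1))"
    unfolding artin euler using nonzero by (rule cancel)
  also have "\<dots> = 1 / (1 - 1 / P)"
    using P by (simp add: power2_eq_square field_simps)
  finally show ?thesis
    using assms by (simp add: artin_factor_def euler_factor_def local_weight_def P_def)
qed

lemma rho_0_closed_form:
  assumes "d > 0"
  shows "rho 0 d = 1 / (real d * real (totient d))"
proof -
  have "rfun d * euler_correction d 1 =
      (\<Prod>p\<in>prime_factors d. local_weight 1 1 p * (artin_factor p * euler_factor d 1 p)) / real d ^ 2"
    by (simp add: rfun_eq_r_twisted r_twisted_def euler_correction_def prod.distrib)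
  also have "\<dots> = (\<Prod>p\<in>prime_factors d. 1 / (1 - 1 / real p)) / real d ^ 2"
    by (intro arg_cong2[where f = "(/)"] prod.cong refl local_factor_at_prime_divisor) auto
  also have "\<dots> = 1 / (real d * real (totient d))"
    by (simp add: totient_formula2 prod_dividef power2_eq_square)
  finally show ?thesis
    using rho_0_eq_euler_correction[OF assms] by simp
qed

lemma euler_correction_2:
  assumes "d > 0"
  shows "euler_correction d 2 = (if odd d then 1 / 2 else 3 / 4) * euler_correction d 1"
proof -
  define S where "S = prime_factors (d * 2)"
  have S: "finite S" "2 \<in> S" "\<And>p. p \<in> S \<Longrightarrow> prime p"
    using assms by (auto simp: S_def in_prime_factors_iff)
  have "prime_factors (d * 1) \<subseteq> S" "prime_factors (d * 2) \<subseteq> S"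
    using assms by (auto simp: S_def prime_factors_product)
  then have factor_at_2: "euler_correction d E =
      artin_factor 2 * euler_factor d E 2 * (\<Prod>p\<in>S - {2}. artin_factor p * euler_factor d E p)"
    if "E \<in> {1, 2}" for E
    using that S assms prod_artin_euler_factor_superset[of S d E]
    by (auto simp: prod.remove)
  have "euler_factor d 2 p = euler_factor d 1 p" if "p \<in> S - {2}" for p
  proof -
    have "prime p" "p \<noteq> 2"
      using that S(3) by auto
    then have "\<not> p dvd 2" "\<not> p dvd 1"
      using primes_dvd_imp_eq two_is_prime_nat by blast+
    then show ?thesis
      by (simp add: euler_factor_def local_weight_def)
  qed
  then have "(\<Prod>p\<in>S - {2}. artin_factor p * euler_factor d 2 p) =
      (\<Prod>p\<in>S - {2}. artin_factor p * euler_factor d 1 p)"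
    by simp
  moreover have "artin_factor 2 * euler_factor d 2 2 = 1 / 2"
    by (simp add: artin_factor_def euler_factor_def local_weight_def)
  moreover have "artin_factor 2 * euler_factor d 1 2 = (if odd d then 1 else 2 / 3)"
    by (simp add: artin_factor_def euler_factor_def local_weight_def)
  ultimately show ?thesis
    using factor_at_2[of 1] factor_at_2[of 2] by auto
qed

lemma rho_0_double:
  assumes "d > 0"
  shows "rho 0 (2 * d) = (if odd d then 1 / 2 else 1 / 4) * rho 0 d"
  using assms by (simp add: rho_0_closed_form totient_double)

theorem mainTheorem9:
  fixes d :: nat
  assumes "d \<ge> 1"
  shows "rho 0 d = 1 / (real d * real (totient d))
    \<and> rho (int d) (2 * d) = (if odd d then rho 0 (2 * d) else 3 * rho 0 (2 * d))"
proof -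
  have d: "d > 0"
    using assms by simp
  have "rho (int d) (2 * d) = (if odd d then 1 / 2 else 3 / 4) * rho 0 d"
    using rho_0_eq_euler_correction[OF d] rho_d_2d_eq_euler_correction[OF d] euler_correction_2[OF d]
    by simp
  then show ?thesis
    using rho_0_closed_form[OF d] rho_0_double[OF d] by auto
qed

end
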